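(* Let $0<\alpha<1$ and let $\varphi$ be a function on $[0,1]$ with $\varphi(s)\ge 0$ for $0\le s\le 1$ (such that the integrals below exist). Define $$s_{n}=\frac{1}{\Gamma(1-\alpha)}\int_{0}^{1}(n+1-s)^{-\alpha}\varphi(s)\,\mathrm{d}s,\qquad n\ge 0.$$ Then for every $k\in\mathbb{N}$ and every $n\ge k$, $(-1)^{k}\nabla^{k}s_{n}\ge 0$.
   Context: Backward differences: $\nabla^{0}s_{n}=s_{n}$ and $\nabla^{k}s_{n}=\nabla^{k-1}s_{n}-\nabla^{k-1}s_{n-1}$ for $k\ge 1$. *)

theory Defs
  imports "HOL-Analysis.Analysis"
begin

fun bdiff :: "nat \<Rightarrow> (nat \<Rightarrow> real) \<Rightarrow> nat \<Rightarrow> real" where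
  "bdiff 0 s n = s n"
| "bdiff (Suc k) s n = bdiff k s n - bdiff k s (n - 1)"

end

theory Submission
  imports Defs
begin

text \<open>Writing \<open>s\<^sub>n = \<integral>\<^sub>0\<^sup>1 f(n; x) \<phi>(x) dx / \<Gamma>(1-\<alpha>)\<close> with \<open>f(t; x) = (t + 1 - x)\<^sup>-\<^sup>\<alpha>\<close>, the operator
  \<open>\<nabla>\<^sup>k\<close> passes under the integral, so it suffices that \<open>(-1)\<^sup>k \<nabla>\<^sup>k\<close> of the samples
  \<open>f(n; x)\<close> is nonnegative for each fixed \<open>x < 1\<close>. This holds for the samples of any
  completely monotone function: by the mean value theorem, \<open>D(t-1) - D(t)\<close> is again
  completely monotone when \<open>D\<close> is, and \<open>-\<nabla>\<close> applied to samples of \<open>D\<close> gives samples of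
  that function. The function \<open>t \<mapsto> (t + c)\<^sup>-\<^sup>\<alpha>\<close> is completely monotone for \<open>\<alpha> > 0\<close>, since its
  \<open>j\<close>-th derivative is \<open>(-1)\<^sup>j (\<alpha>)\<^sub>j (t + c)\<^sup>-\<^sup>\<alpha>\<^sup>-\<^sup>j\<close>.\<close>

lemma bdiff_diff: "bdiff k (\<lambda>m. s m - t m) n = bdiff k s n - bdiff k t n"
  by (induction k arbitrary: n) auto

lemma bdiff_scale: "bdiff k (\<lambda>m. c * t m) n = c * bdiff k t n"
  by (induction k arbitrary: n) (auto simp: algebra_simps)

lemma bdiff_shift: "bdiff k (\<lambda>m. s (m - 1)) n = bdiff k s (n - 1)"
  by (induction k arbitrary: n) auto

lemma bdiff_cong:
  "(\<And>m. n - k \<le> m \<Longrightarrow> m \<le> n \<Longrightarrow> s m = t m) \<Longrightarrow> bdiff k s n = bdiff k t n"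
proof (induction k arbitrary: n)
  case 0
  then show ?case by simp
next
  case (Suc k)
  have "bdiff k s n = bdiff k t n" "bdiff k s (n - 1) = bdiff k t (n - 1)"
    by (rule Suc.IH; use Suc.prems in auto)+
  then show ?case by simp
qed

lemma set_integrable_bdiff_and_integral:
  assumes "\<And>m. set_integrable M A (F m)"
  shows "set_integrable M A (\<lambda>x. bdiff k (\<lambda>m. F m x) n) \<and>
         (LINT x:A|M. bdiff k (\<lambda>m. F m x) n) = bdiff k (\<lambda>m. LINT x:A|M. F m x) n"
proof (induction k arbitrary: n)
  case 0
  then show ?case using assms by simp
next
  case (Suc k)
  from Suc.IH[of n] Suc.IH[of "n - 1"] show ?case by simp
qed

text \<open>\<open>D j\<close> plays the role of the \<open>j\<close>-th derivative of \<open>D 0\<close>; the predicate says that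
  \<open>D 0\<close> is completely monotone on \<open>(a, \<infinity>)\<close>.\<close>

definition alternating_derivatives :: "real \<Rightarrow> (nat \<Rightarrow> real \<Rightarrow> real) \<Rightarrow> bool" where
  "alternating_derivatives a D \<longleftrightarrow>
     (\<forall>j t. a < t \<longrightarrow> (D j has_real_derivative D (Suc j) t) (at t) \<and> 0 \<le> (-1) ^ j * D j t)"

lemma alternating_derivatives_backward_difference:
  assumes D: "alternating_derivatives a D"
  shows "alternating_derivatives (a + 1) (\<lambda>j t. D j (t - 1) - D j t)"
  unfolding alternating_derivatives_def
proof (intro allI impI conjI)
  fix j and t :: real
  assume t: "a + 1 < t"
  have deriv: "(D j has_real_derivative D (Suc j) x) (at x)" "0 \<le> (-1) ^ j * D j x"
    if "t - 1 \<le> x" for j x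
    using D t that unfolding alternating_derivatives_def by auto
  have "((\<lambda>t. D j (t - 1)) has_real_derivative D (Suc j) (t - 1)) (at t)"
    using DERIV_chain2[OF deriv(1)[of "t - 1"] DERIV_diff[OF DERIV_ident DERIV_const]] by simp
  then show "((\<lambda>t. D j (t - 1) - D j t) has_real_derivative D (Suc j) (t - 1) - D (Suc j) t) (at t)"
    using deriv(1)[of t] by (auto intro!: derivative_eq_intros)
  obtain z where z: "t - 1 < z" "z < t" "D j t - D j (t - 1) = D (Suc j) z"
    using MVT2[of "t - 1" t "D j" "D (Suc j)"] deriv(1) by auto
  have "(-1) ^ j * (D j (t - 1) - D j t) = (-1) ^ Suc j * D (Suc j) z"
    using z(3) by (simp add: algebra_simps)
  also have "\<dots> \<ge> 0"
    using deriv(2)[of z "Suc j"] z(1) by simp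
  finally show "0 \<le> (-1) ^ j * (D j (t - 1) - D j t)" .
qed

lemma bdiff_alternating_derivatives_nonneg:
  assumes "alternating_derivatives a D" and "k \<le> n" and "a < real n - real k"
  shows "0 \<le> (-1) ^ k * bdiff k (\<lambda>m. D 0 (real m)) n"
  using assms
proof (induction k arbitrary: D a n)
  case 0
  then show ?case
    unfolding alternating_derivatives_def by (auto dest!: spec[where x = 0] spec[where x = "real n"])
next
  case (Suc k)
  let ?f = "\<lambda>m. D 0 (real m)"
  let ?E = "\<lambda>j t. D j (t - 1) - D j t"
  have IH: "0 \<le> (-1) ^ k * bdiff k (\<lambda>m. ?E 0 (real m)) n"
    using Suc.IH[OF alternating_derivatives_backward_difference[OF Suc.prems(1)]] Suc.prems(2,3)
    by simp
  have "bdiff k (\<lambda>m. ?E 0 (real m)) n = bdiff k (\<lambda>m. ?f (m - 1) - ?f m) n"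
    by (rule bdiff_cong) (use Suc.prems(2) in \<open>auto simp: of_nat_diff\<close>)
  also have "\<dots> = bdiff k ?f (n - 1) - bdiff k ?f n"
    using bdiff_shift[of k ?f n] by (simp add: bdiff_diff)
  finally have "bdiff (Suc k) ?f n = - bdiff k (\<lambda>m. ?E 0 (real m)) n"
    by simp
  then show ?case using IH by simp
qed

lemma alternating_derivatives_powr:
  assumes "0 < \<alpha>"
  shows "alternating_derivatives (- c)
           (\<lambda>j t. (-1) ^ j * pochhammer \<alpha> j * (t + c) powr (- \<alpha> - real j))"
  unfolding alternating_derivatives_def
proof (intro allI impI conjI)
  fix j and t :: real
  assume "- c < t"
  then show "((\<lambda>t. (-1) ^ j * pochhammer \<alpha> j * (t + c) powr (- \<alpha> - real j)) has_real_derivative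
      (-1) ^ Suc j * pochhammer \<alpha> (Suc j) * (t + c) powr (- \<alpha> - real (Suc j))) (at t)"
    by (auto intro!: derivative_eq_intros simp: pochhammer_Suc algebra_simps)
  have "(-1) ^ j * ((-1) ^ j * pochhammer \<alpha> j * (t + c) powr (- \<alpha> - real j))
      = pochhammer \<alpha> j * (t + c) powr (- \<alpha> - real j)"
    by (simp flip: mult.assoc power_mult_distrib)
  also have "\<dots> \<ge> 0"
    using assms by (simp add: pochhammer_nonneg)
  finally show "0 \<le> (-1) ^ j * ((-1) ^ j * pochhammer \<alpha> j * (t + c) powr (- \<alpha> - real j))" .
qed

lemma bdiff_powr_nonneg:
  assumes "0 < \<alpha>" and "k \<le> n" and "x < 1"
  shows "0 \<le> (-1) ^ k * bdiff k (\<lambda>m. (real m + 1 - x) powr (- \<alpha>)) n"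
  using bdiff_alternating_derivatives_nonneg[OF alternating_derivatives_powr[OF assms(1), of "1 - x"]]
    assms(2,3) by (simp add: algebra_simps)

theorem lemma2p5:
  fixes \<alpha> :: real and \<phi> :: "real \<Rightarrow> real" and s :: "nat \<Rightarrow> real"
  assumes "0 < \<alpha>" and "\<alpha> < 1"
    and "\<And>x. 0 \<le> x \<Longrightarrow> x \<le> 1 \<Longrightarrow> \<phi> x \<ge> 0"
    and "\<And>n. set_integrable lborel {0..1} (\<lambda>x. (real n + 1 - x) powr (-\<alpha>) * \<phi> x)"
    and "\<And>n. s n = (1 / Gamma (1 - \<alpha>)) *
                 (LINT x:{0..1}|lborel. (real n + 1 - x) powr (-\<alpha>) * \<phi> x)"
    and "k \<le> n"
  shows "(-1) ^ k * bdiff k s n \<ge> 0"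
proof -
  define g where "g m x = (real m + 1 - x) powr (-\<alpha>)" for m x
  have bdiff_integrand: "bdiff k (\<lambda>m. g m x * \<phi> x) n = \<phi> x * bdiff k (\<lambda>m. g m x) n" for x
    using bdiff_scale[of k "\<phi> x" "\<lambda>m. g m x" n] by (simp add: mult.commute)
  have integrand_nonneg: "0 \<le> \<phi> x * ((-1) ^ k * bdiff k (\<lambda>m. g m x) n)" if "0 \<le> x" "x < 1" for x
    unfolding g_def using assms(1,6) that by (intro mult_nonneg_nonneg assms(3) bdiff_powr_nonneg) auto
  have s_eq: "s = (\<lambda>m. 1 / Gamma (1 - \<alpha>) * (LINT x:{0..1}|lborel. g m x * \<phi> x))"
    using assms(5) by (auto simp: g_def)
  have "(-1) ^ k * bdiff k s n
      = (-1) ^ k * (1 / Gamma (1 - \<alpha>) * bdiff k (\<lambda>m. LINT x:{0..1}|lborel. g m x * \<phi> x) n)"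
    by (simp only: s_eq bdiff_scale)
  also have "\<dots> = (-1) ^ k * (LINT x:{0..1}|lborel. \<phi> x * bdiff k (\<lambda>m. g m x) n) / Gamma (1 - \<alpha>)"
    using set_integrable_bdiff_and_integral[of lborel "{0..1}" "\<lambda>m x. g m x * \<phi> x" k n] assms(4)
    by (simp add: bdiff_integrand flip: g_def)
  also have "\<dots> = (LINT x:{0..1}|lborel. \<phi> x * ((-1) ^ k * bdiff k (\<lambda>m. g m x) n)) / Gamma (1 - \<alpha>)"
    by (simp flip: set_integral_mult_right add: mult.left_commute)
  also have "\<dots> \<ge> 0"
    unfolding set_lebesgue_integral_def
  proof (intro divide_nonneg_pos integral_nonneg_AE)
    show "AE x in lborel. 0 \<le> indicator {0..1} x *\<^sub>R (\<phi> x * ((-1) ^ k * bdiff k (\<lambda>m. g m x) n))"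
      using AE_lborel_singleton[of "1::real"]
      by eventually_elim
        (auto simp: indicator_def intro: integrand_nonneg)
    show "0 < Gamma (1 - \<alpha>)"
      using assms(2) by simp
  qed
  finally show ?thesis .
qed

end
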